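(* For each $w>0$ there exists a unique probability density $p$ on $[0,\infty)$ with $\int_0^\infty x\,p(x)\,dx=w$ satisfying $T[p]=p$, and it is given by $$p_w(x)=\frac{4}{w^2}\,x\,e^{-\frac{2}{w}x},\qquad x\ge 0.$$
   Context: Let $\mathcal{P}$ denote the set of probability densities on $[0,\infty)$. For $p\in\mathcal{P}$ define $S[p](x)=\int_x^\infty \frac{p(u)}{u}\,du$ for $x\ge 0$, and define the nonlinear operator $T:\mathcal{P}\to\mathcal{P}$ by $T[p]=S[p]*S[p]$, i.e. $T[p](x)=\int_0^x S[p](x-v)\,S[p](v)\,dv$. (This is the infinite-population Immediate Exchange model: $p_{t+1}=T[p_t]$ is the density of $\epsilon_1U+\epsilon_2V$ where $U,V$ have density $p_t$, $\epsilon_1,\epsilon_2\sim \mathrm{Uniform}([0,1])$, all independent.) An equilibrium distribution is a $p\in\mathcal{P}$ with $T[p]=p$. *)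

theory Defs
  imports "HOL-Analysis.Analysis"
begin

definition is_density :: "(real \<Rightarrow> real) \<Rightarrow> bool" where
  "is_density p \<longleftrightarrow> (\<forall>x\<ge>0. 0 \<le> p x) \<and> set_integrable lborel {0..} p
     \<and> (LINT x:{0..}|lborel. p x) = 1"

definition S_op :: "(real \<Rightarrow> real) \<Rightarrow> real \<Rightarrow> real" where
  "S_op p x = (LINT u:{x<..}|lborel. p u / u)"

definition T_op :: "(real \<Rightarrow> real) \<Rightarrow> real \<Rightarrow> real" where
  "T_op p x = (LINT v:{0..x}|lborel. S_op p (x - v) * S_op p v)"

text \<open>Densities are identified up to Lebesgue-null sets, so T[p] = p means a.e. on [0,oo).\<close>
definition is_equilibrium :: "(real \<Rightarrow> real) \<Rightarrow> bool" where
  "is_equilibrium p \<longleftrightarrow> is_density p \<and> (AE x in lborel. x \<ge> 0 \<longrightarrow> T_op p x = p x)"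

definition has_mean :: "(real \<Rightarrow> real) \<Rightarrow> real \<Rightarrow> bool" where
  "has_mean p w \<longleftrightarrow> set_integrable lborel {0..} (\<lambda>x. x * p x)
     \<and> (LINT x:{0..}|lborel. x * p x) = w"

definition p_eq :: "real \<Rightarrow> real \<Rightarrow> real" where
  "p_eq w x = 4 / w^2 * x * exp (- (2 / w) * x)"

end

theory Submission
  imports Defs "HOL-Probability.Probability"
begin

text \<open>
  The density \<open>p_eq w\<close> is the Gamma density with shape 2 and rate 2/w. The operator S maps it
  to the exponential density (2/w) e^(-2x/w), whose self-convolution is \<open>p_eq w\<close> again.

  For uniqueness, T[p] = p says that the law of p is the law of U X + U' X', where X, X' have
  law p, U, U' are uniform on [0,1), and all four are independent. Hence its characteristic
  function satisfies \<open>\<phi>(t) = (\<integral>\<^sub>0\<^sup>1 \<phi>(ts) ds)\<^sup>2\<close>, and since \<open>|\<phi>| \<le> 1\<close>, two solutions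
  \<open>\<phi>, \<psi>\<close> satisfy \<open>|\<phi>(t) - \<psi>(t)| \<le> 2 \<integral>\<^sub>0\<^sup>1 |\<phi>(ts) - \<psi>(ts)| ds\<close>. If both laws have mean w,
  then \<open>\<phi>(t) = 1 + i w t + o(t)\<close> and likewise for \<open>\<psi>\<close>, so \<open>|\<phi> - \<psi>|\<close> is o(t). Let m be the
  least constant with \<open>|\<phi>(t) - \<psi>(t)| \<le> m |t|\<close> on [-T, T]. Splitting the average at s = d,
  where the o(t) bound \<open>|\<phi> - \<psi>| \<le> e |t|\<close> holds for \<open>|t| \<le> d T\<close>, gives
  \<open>m \<le> d\<^sup>2 e + (1 - d\<^sup>2) m\<close>, i.e. \<open>m \<le> e\<close>, for every e > 0. So \<open>\<phi> = \<psi>\<close>, and Levy's uniqueness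
  theorem identifies the two laws.
\<close>

section \<open>The equilibrium density\<close>

lemma erlang_moment:
  fixes k i :: nat and l :: real
  assumes l: "0 < l"
  shows "integrable lborel (\<lambda>x. erlang_density k l x * x ^ i)"
    and "(LINT x|lborel. erlang_density k l x * x ^ i) = fact (k + i) / (fact k * l ^ i)"
proof -
  have "(\<integral>\<^sup>+x. ennreal (erlang_density k l x * x ^ i) \<partial>lborel) = ennreal (fact (k + i) / (fact k * l ^ i))"
    using nn_integral_erlang_ith_moment[OF l, of k i] l by (simp add: ennreal_mult' divide_ennreal)
  moreover have "AE x in lborel. 0 \<le> erlang_density k l x * x ^ i"
    using l by (auto simp: erlang_density_def)
  ultimately show "integrable lborel (\<lambda>x. erlang_density k l x * x ^ i)"
    and "(LINT x|lborel. erlang_density k l x * x ^ i) = fact (k + i) / (fact k * l ^ i)"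
    using l by (simp_all add: nn_integral_eq_integrable)
qed

lemma exponential_tail:
  fixes l a :: real
  assumes l: "0 < l"
  shows "integrable lborel (\<lambda>u. indicator {a<..} u * (l * exp (- l * u)))"
    and "(LINT u|lborel. indicator {a<..} u * (l * exp (- l * u))) = exp (- l * a)"
proof -
  have "(\<integral>\<^sup>+u. ennreal (indicator {a<..} u * (l * exp (- l * u))) \<partial>lborel)
      = (\<integral>\<^sup>+x. ennreal (indicator {a<..} (a + 1 * x) * (l * exp (- l * (a + 1 * x)))) \<partial>lborel)"
    by (subst nn_integral_real_affine[where c=1 and t=a]) simp_all
  also have "\<dots> = (\<integral>\<^sup>+x. ennreal (exp (- l * a)) * ennreal (exponential_density l x) \<partial>lborel)"
    using AE_lborel_singleton[of 0]
    by (intro nn_integral_cong_AE) (auto simp: exponential_density_def indicator_def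
        ennreal_mult'[symmetric] exp_add[symmetric] algebra_simps)
  also have "\<dots> = ennreal (exp (- l * a))"
    using nn_integral_erlang_ith_moment[OF l, of 0 0] by (simp add: nn_integral_cmult)
  finally have "(\<integral>\<^sup>+u. ennreal (indicator {a<..} u * (l * exp (- l * u))) \<partial>lborel) = ennreal (exp (- l * a))" .
  then show "integrable lborel (\<lambda>u. indicator {a<..} u * (l * exp (- l * u)))"
    and "(LINT u|lborel. indicator {a<..} u * (l * exp (- l * u))) = exp (- l * a)"
    using l by (simp_all add: nn_integral_eq_integrable)
qed

lemma indicator_times_p_eq: "indicator {0..} x * p_eq w x = erlang_density 1 (2 / w) x"
  by (simp add: p_eq_def erlang_density_def indicator_def power2_eq_square field_simps)

lemma is_density_p_eq:
  assumes "0 < w"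
  shows "is_density (p_eq w)"
proof -
  have "(\<lambda>x. indicator {0..} x *\<^sub>R p_eq w x) = (\<lambda>x. erlang_density 1 (2 / w) x * x ^ 0)"
    using indicator_times_p_eq by simp
  then show ?thesis
    using erlang_moment[of "2 / w" 1 0] assms
    unfolding is_density_def set_integrable_def set_lebesgue_integral_def by (simp add: p_eq_def)
qed

lemma has_mean_p_eq:
  assumes "0 < w"
  shows "has_mean (p_eq w) w"
proof -
  have "(\<lambda>x. indicator {0..} x *\<^sub>R (x * p_eq w x)) = (\<lambda>x. erlang_density 1 (2 / w) x * x ^ 1)"
    using indicator_times_p_eq by (simp add: fun_eq_iff algebra_simps)
  then show ?thesis
    using erlang_moment[of "2 / w" 1 1] assms
    unfolding has_mean_def set_integrable_def set_lebesgue_integral_def by simp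
qed

lemma S_op_p_eq:
  assumes "0 < w" and "0 \<le> x"
  shows "S_op (p_eq w) x = 2 / w * exp (- (2 / w) * x)"
proof -
  have "(\<lambda>u. indicator {x<..} u *\<^sub>R (p_eq w u / u))
      = (\<lambda>u. 2 / w * (indicator {x<..} u * (2 / w * exp (- (2 / w) * u))))"
    using assms by (auto simp: fun_eq_iff indicator_def p_eq_def power2_eq_square field_simps)
  moreover have "0 < 2 / w"
    using assms by simp
  ultimately show ?thesis
    unfolding S_op_def set_lebesgue_integral_def by (simp only: integral_mult_right_zero exponential_tail(2))
qed

lemma T_op_p_eq:
  assumes "0 < w" and "0 \<le> x"
  shows "T_op (p_eq w) x = p_eq w x"
proof -
  have "indicator {0..x} v *\<^sub>R (S_op (p_eq w) (x - v) * S_op (p_eq w) v)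
      = indicator {0..x} v * (4 / w^2 * exp (- (2 / w) * x))" for v
    using assms by (auto simp: indicator_def S_op_p_eq power2_eq_square exp_add[symmetric] field_simps)
  then have "T_op (p_eq w) x = measure lborel {0..x} * (4 / w^2 * exp (- (2 / w) * x))"
    by (simp add: T_op_def set_lebesgue_integral_def)
  then show ?thesis
    using assms by (simp add: p_eq_def)
qed

lemma is_equilibrium_p_eq: "0 < w \<Longrightarrow> is_equilibrium (p_eq w)"
  by (simp add: is_equilibrium_def is_density_p_eq T_op_p_eq)

section \<open>The law of an equilibrium as a convolution\<close>

definition zero_ext :: "(real \<Rightarrow> real) \<Rightarrow> real \<Rightarrow> real" where
  "zero_ext p x = indicator {0..} x * p x"

definition law :: "(real \<Rightarrow> real) \<Rightarrow> real measure" where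
  "law p = density lborel (\<lambda>x. ennreal (zero_ext p x))"

definition uniform01 :: "real measure" where
  "uniform01 = density lborel (indicator {0..<1})"

definition S_dens :: "(real \<Rightarrow> real) \<Rightarrow> real \<Rightarrow> ennreal" where
  "S_dens p y = indicator {0<..} y * (\<integral>\<^sup>+u. ennreal (zero_ext p u / u) * indicator {y<..} u \<partial>lborel)"

definition scaled_law :: "(real \<Rightarrow> real) \<Rightarrow> real measure" where
  "scaled_law p = density lborel (S_dens p)"

lemma sets_law [simp, measurable_cong]: "sets (law p) = sets borel"
  by (simp add: law_def)

lemma sets_uniform01 [simp, measurable_cong]: "sets uniform01 = sets borel"
  by (simp add: uniform01_def)

lemma sets_scaled_law [simp, measurable_cong]: "sets (scaled_law p) = sets borel"
  by (simp add: scaled_law_def)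

lemma prob_space_uniform01: "prob_space uniform01"
  by (rule prob_spaceI) (simp add: uniform01_def emeasure_density)

lemma nn_integral_uniform01_scale:
  fixes f :: "real \<Rightarrow> ennreal"
  assumes [measurable]: "f \<in> borel_measurable borel" and u: "0 < u"
  shows "ennreal u * (\<integral>\<^sup>+s. indicator {0..<1} s * f (s * u) \<partial>lborel)
    = (\<integral>\<^sup>+y. indicator {0..<u} y * f y \<partial>lborel)"
proof -
  have "(\<integral>\<^sup>+y. indicator {0..<u} y * f y \<partial>lborel)
      = ennreal \<bar>u\<bar> * (\<integral>\<^sup>+s. indicator {0..<u} (0 + u * s) * f (0 + u * s) \<partial>lborel)"
    using u by (intro nn_integral_real_affine) simp_all
  also have "(\<lambda>s. indicator {0..<u} (0 + u * s) * f (0 + u * s)) = (\<lambda>s. indicator {0..<1} s * f (s * u))"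
    using u by (auto simp: fun_eq_iff indicator_def zero_le_mult_iff mult.commute)
  finally show ?thesis
    using u by simp
qed

context
  fixes p :: "real \<Rightarrow> real"
  assumes dens: "is_density p"
begin

lemma integrable_zero_ext: "integrable lborel (zero_ext p)"
  using dens unfolding is_density_def set_integrable_def zero_ext_def[abs_def] by simp

lemma zero_ext_measurable [measurable]: "zero_ext p \<in> borel_measurable borel"
  using borel_measurable_integrable[OF integrable_zero_ext] by simp

lemma zero_ext_nonneg: "0 \<le> zero_ext p x"
  using dens by (simp add: is_density_def zero_ext_def indicator_def)

lemma real_distribution_law: "real_distribution (law p)"
proof -
  have "integral\<^sup>L lborel (zero_ext p) = 1"
    using dens unfolding is_density_def set_lebesgue_integral_def zero_ext_def[abs_def] by simp
  then have "emeasure (law p) (space (law p)) = 1"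
    by (simp add: law_def emeasure_density nn_integral_eq_integral integrable_zero_ext zero_ext_nonneg)
  then show ?thesis
    by (simp add: real_distribution_def real_distribution_axioms_def prob_spaceI)
qed

lemma S_dens_measurable [measurable]: "S_dens p \<in> borel_measurable borel"
proof -
  have "(\<lambda>(y, u). ennreal (zero_ext p u / u) * indicator {y<..} u) \<in> borel_measurable (lborel \<Otimes>\<^sub>M lborel)"
  proof -
    have "(\<lambda>z::real \<times> real. ennreal (zero_ext p (snd z) / snd z) * (if fst z < snd z then 1 else 0))
        \<in> borel_measurable (lborel \<Otimes>\<^sub>M lborel)"
      by measurable
    then show ?thesis
      by (simp add: case_prod_beta indicator_def)
  qed
  then show ?thesis
    unfolding S_dens_def[abs_def] using lborel.borel_measurable_nn_integral_fst by measurable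
qed

lemma S_dens_eq:
  assumes y: "0 < y"
  shows "S_dens p y = ennreal (S_op p y)" and "0 \<le> S_op p y"
proof -
  have nonneg: "0 \<le> zero_ext p u / u * indicator {y<..} u" for u
    using y zero_ext_nonneg[of u] by (simp add: indicator_def)
  have int: "integrable lborel (\<lambda>u. zero_ext p u / u * indicator {y<..} u)"
  proof (rule Bochner_Integration.integrable_bound)
    show "integrable lborel (\<lambda>u. zero_ext p u / y)"
      using integrable_zero_ext by simp
    show "AE u in lborel. norm (zero_ext p u / u * indicator {y<..} u) \<le> norm (zero_ext p u / y)"
      using y zero_ext_nonneg
      by (auto simp: indicator_def divide_left_mono)
  qed simp
  have S: "S_op p y = (LINT u|lborel. zero_ext p u / u * indicator {y<..} u)"
    unfolding S_op_def set_lebesgue_integral_def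
    using y by (intro Bochner_Integration.integral_cong) (auto simp: indicator_def zero_ext_def)
  have "S_dens p y = (\<integral>\<^sup>+u. ennreal (zero_ext p u / u * indicator {y<..} u) \<partial>lborel)"
    using y unfolding S_dens_def by (auto intro!: nn_integral_cong split: split_indicator)
  also have "\<dots> = ennreal (S_op p y)"
    unfolding S by (rule nn_integral_eq_integral[OF int]) (intro AE_I2 nonneg)
  finally show "S_dens p y = ennreal (S_op p y)" .
  show "0 \<le> S_op p y"
    using nonneg by (simp add: S)
qed

lemma nn_integral_S_dens:
  assumes "y \<noteq> 0"
  shows "(\<integral>\<^sup>+u. ennreal (zero_ext p u / u) * indicator {0..<u} y * c \<partial>lborel) = S_dens p y * c"
proof (cases "y < 0")
  case True
  then show ?thesis
    by (simp add: S_dens_def)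
next
  case False
  with assms have "0 < y"
    by simp
  then have "(\<integral>\<^sup>+u. ennreal (zero_ext p u / u) * indicator {0..<u} y * c \<partial>lborel)
      = (\<integral>\<^sup>+u. ennreal (zero_ext p u / u) * indicator {y<..} u \<partial>lborel) * c"
    by (subst nn_integral_multc[symmetric]) (auto intro!: nn_integral_cong split: split_indicator)
  then show ?thesis
    using \<open>0 < y\<close> by (simp add: S_dens_def)
qed

lemma nn_integral_uniform01_scale_zero_ext:
  fixes f :: "real \<Rightarrow> ennreal"
  assumes [measurable]: "f \<in> borel_measurable borel" and "u \<noteq> 0"
  shows "ennreal (zero_ext p u) * (\<integral>\<^sup>+s. indicator {0..<1} s * f (s * u) \<partial>lborel)
    = (\<integral>\<^sup>+y. ennreal (zero_ext p u / u) * indicator {0..<u} y * f y \<partial>lborel)"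
proof (cases "u < 0")
  case True
  then show ?thesis
    by (simp add: zero_ext_def)
next
  case False
  with assms have u: "0 < u"
    by simp
  then have "ennreal (zero_ext p u) = ennreal (zero_ext p u / u) * ennreal u"
    using zero_ext_nonneg by (simp add: ennreal_mult'[symmetric])
  then show ?thesis
    using u by (simp add: nn_integral_uniform01_scale mult.assoc nn_integral_cmult)
qed

lemma scaled_law_eq_distr: "scaled_law p = distr (uniform01 \<Otimes>\<^sub>M law p) borel (\<lambda>(s, u). s * u)"
proof (rule measure_eqI)
  fix A assume "A \<in> sets (scaled_law p)"
  then have [measurable]: "A \<in> sets borel"
    by simp
  interpret U: prob_space uniform01
    by (rule prob_space_uniform01)
  interpret P: prob_space "law p"
    using real_distribution_law by (simp add: real_distribution_def)
  interpret pair_sigma_finite uniform01 "law p" ..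
  have "emeasure (distr (uniform01 \<Otimes>\<^sub>M law p) borel (\<lambda>(s, u). s * u)) A
      = (\<integral>\<^sup>+x. indicator A x \<partial>distr (uniform01 \<Otimes>\<^sub>M law p) borel (\<lambda>(s, u). s * u))"
    by simp
  also have "\<dots> = (\<integral>\<^sup>+z. indicator A ((\<lambda>(s, u). s * u) z) \<partial>(uniform01 \<Otimes>\<^sub>M law p))"
    by (rule nn_integral_distr) simp_all
  also have "\<dots> = (\<integral>\<^sup>+u. \<integral>\<^sup>+s. indicator A (s * u) \<partial>uniform01 \<partial>law p)"
    by (subst nn_integral_snd[symmetric]) (simp_all add: case_prod_beta)
  also have "\<dots> = (\<integral>\<^sup>+u. ennreal (zero_ext p u) * (\<integral>\<^sup>+s. indicator {0..<1} s * indicator A (s * u) \<partial>lborel) \<partial>lborel)"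
    by (simp add: law_def uniform01_def nn_integral_density)
  also have "\<dots> = (\<integral>\<^sup>+u. \<integral>\<^sup>+y. ennreal (zero_ext p u / u) * indicator {0..<u} y * indicator A y \<partial>lborel \<partial>lborel)"
    using AE_lborel_singleton[of 0]
    by (intro nn_integral_cong_AE) (auto elim!: eventually_mono simp: nn_integral_uniform01_scale_zero_ext)
  also have "\<dots> = (\<integral>\<^sup>+y. \<integral>\<^sup>+u. ennreal (zero_ext p u / u) * indicator {0..<u} y * indicator A y \<partial>lborel \<partial>lborel)"
    by (rule lborel_pair.Fubini') (simp add: indicator_def)
  also have "\<dots> = (\<integral>\<^sup>+y. S_dens p y * indicator A y \<partial>lborel)"
    using AE_lborel_singleton[of 0]
    by (intro nn_integral_cong_AE) (auto elim!: eventually_mono simp: nn_integral_S_dens)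
  also have "\<dots> = emeasure (scaled_law p) A"
    by (simp add: scaled_law_def emeasure_density)
  finally show "emeasure (scaled_law p) A = emeasure (distr (uniform01 \<Otimes>\<^sub>M law p) borel (\<lambda>(s, u). s * u)) A" ..
qed simp

lemma prob_space_scaled_law: "prob_space (scaled_law p)"
proof -
  interpret U: prob_space uniform01
    by (rule prob_space_uniform01)
  interpret L: prob_space "law p"
    using real_distribution_law by (simp add: real_distribution_def)
  interpret pair_prob_space uniform01 "law p" ..
  show ?thesis
    unfolding scaled_law_eq_distr by (rule prob_space_distr) simp
qed

lemma convolution_scaled_law:
  "(scaled_law p \<star> scaled_law p) = density lborel (\<lambda>x. \<integral>\<^sup>+y. S_dens p (x - y) * S_dens p y \<partial>lborel)"
proof -
  interpret S: prob_space "scaled_law p"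
    by (rule prob_space_scaled_law)
  have fin: "finite_measure (density lborel (S_dens p))"
    unfolding scaled_law_def[symmetric] by (rule S.finite_measure_axioms)
  show ?thesis
    unfolding scaled_law_def by (rule convolution_density) (simp_all add: fin)
qed

lemma AE_nn_convolution_S_dens_finite:
  "AE x in lborel. (\<integral>\<^sup>+y. S_dens p (x - y) * S_dens p y \<partial>lborel) \<noteq> \<infinity>"
proof (rule nn_integral_PInf_AE)
  interpret S: prob_space "scaled_law p"
    by (rule prob_space_scaled_law)
  have "finite_measure (scaled_law p \<star> scaled_law p)"
    by (rule convolution_finite) simp_all
  then have "emeasure (scaled_law p \<star> scaled_law p) UNIV \<noteq> \<infinity>"
    using finite_measure.emeasure_finite by auto
  then show "(\<integral>\<^sup>+x. \<integral>\<^sup>+y. S_dens p (x - y) * S_dens p y \<partial>lborel \<partial>lborel) \<noteq> \<infinity>"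
    by (simp add: convolution_scaled_law emeasure_density)
qed simp

lemma T_op_eq_nn_convolution:
  assumes x: "0 \<le> x" and fin: "(\<integral>\<^sup>+v. S_dens p (x - v) * S_dens p v \<partial>lborel) \<noteq> \<infinity>"
  shows "(\<integral>\<^sup>+v. S_dens p (x - v) * S_dens p v \<partial>lborel) = ennreal (T_op p x)"
proof -
  define g where "g v = indicator {0<..<x} v * (S_op p (x - v) * S_op p v)" for v
  have g_nonneg: "0 \<le> g v" for v
    using S_dens_eq(2) by (simp add: g_def indicator_def)
  have prod_eq: "S_dens p (x - v) * S_dens p v = ennreal (g v)" for v
    using S_dens_eq[of v] S_dens_eq[of "x - v"]
    by (cases "0 < v \<and> v < x") (auto simp: g_def S_dens_def ennreal_mult)
  have "g = (\<lambda>v. enn2real (S_dens p (x - v) * S_dens p v))"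
    by (simp add: fun_eq_iff prod_eq g_nonneg)
  then have [measurable]: "g \<in> borel_measurable borel"
    by simp
  have T: "T_op p x = integral\<^sup>L lborel g"
    unfolding T_op_def set_lebesgue_integral_def
    by (rule integral_discrete_difference[where X="{0, x}"]) (auto simp: g_def indicator_def)
  have "integrable lborel g"
    using fin by (intro integrableI_nonneg) (simp_all add: prod_eq g_nonneg less_top)
  then show ?thesis
    unfolding prod_eq T by (rule nn_integral_eq_integral) (simp add: g_nonneg)
qed

end

lemma law_eq_convolution:
  assumes eq: "is_equilibrium p"
  shows "law p = (scaled_law p \<star> scaled_law p)"
proof -
  have dens: "is_density p"
    using eq by (simp add: is_equilibrium_def)
  note [measurable] = S_dens_measurable[OF dens] zero_ext_measurable[OF dens]
  let ?c = "\<lambda>x. \<integral>\<^sup>+y. S_dens p (x - y) * S_dens p y \<partial>lborel"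
  have "AE x in lborel. 0 \<le> x \<longrightarrow> T_op p x = p x"
    using eq by (simp add: is_equilibrium_def)
  with AE_nn_convolution_S_dens_finite[OF dens]
  have "AE x in lborel. ennreal (zero_ext p x) = ?c x"
  proof eventually_elim
    fix x assume fx: "?c x \<noteq> \<infinity>" and T: "0 \<le> x \<longrightarrow> T_op p x = p x"
    show "ennreal (zero_ext p x) = ?c x"
    proof (cases "0 \<le> x")
      case True
      then show ?thesis
        using T T_op_eq_nn_convolution[OF dens True fx] by (simp add: zero_ext_def)
    next
      case False
      then have "?c x = 0"
        by (auto intro!: nn_integral_zero' simp: S_dens_def split: split_indicator)
      then show ?thesis
        using False by (simp add: zero_ext_def)
    qed
  qed
  then show ?thesis
    unfolding convolution_scaled_law[OF dens] law_def by (rule density_cong[rotated 2]) simp_all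
qed

section \<open>Characteristic functions\<close>

lemma char_convolution:
  assumes "prob_space M" "prob_space N"
    and [measurable_cong]: "sets M = sets borel" "sets N = sets borel"
  shows "char (M \<star> N) t = char M t * char N t"
proof -
  interpret M: prob_space M by fact
  interpret N: prob_space N by fact
  interpret pair_prob_space M N ..
  have int: "integrable (M \<Otimes>\<^sub>M N) (\<lambda>(x, y). iexp (t * x) * iexp (t * y))"
    by (rule integrable_const_bound[where B=1]) (auto simp: norm_mult)
  have "char (M \<star> N) t = (CLINT z|M \<Otimes>\<^sub>M N. iexp (t * ((\<lambda>(x, y). x + y) z)))"
    unfolding convolution_def char_def by (rule integral_distr) simp_all
  also have "\<dots> = (CLINT z|M \<Otimes>\<^sub>M N. (\<lambda>(x, y). iexp (t * x) * iexp (t * y)) z)"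
    by (rule Bochner_Integration.integral_cong) (auto simp: distrib_left exp_add)
  also have "\<dots> = (CLINT x|M. CLINT y|N. iexp (t * x) * iexp (t * y))"
    by (rule integral_fst[symmetric, OF int])
  also have "\<dots> = char M t * char N t"
    unfolding char_def by simp
  finally show ?thesis .
qed

lemma char_scaled_law:
  assumes dens: "is_density p"
  shows "char (scaled_law p) t = (CLINT s|uniform01. char (law p) (t * s))"
proof -
  interpret U: prob_space uniform01
    by (rule prob_space_uniform01)
  interpret L: prob_space "law p"
    using real_distribution_law[OF dens] by (simp add: real_distribution_def)
  interpret pair_prob_space uniform01 "law p" ..
  have int: "integrable (uniform01 \<Otimes>\<^sub>M law p) (\<lambda>(s, u). iexp (t * (s * u)))"
    by (rule integrable_const_bound[where B=1]) auto
  have "char (scaled_law p) t = (CLINT z|uniform01 \<Otimes>\<^sub>M law p. iexp (t * ((\<lambda>(s, u). s * u) z)))"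
    unfolding scaled_law_eq_distr[OF dens] char_def by (rule integral_distr) simp_all
  also have "\<dots> = (CLINT z|uniform01 \<Otimes>\<^sub>M law p. (\<lambda>(s, u). iexp (t * (s * u))) z)"
    by (rule Bochner_Integration.integral_cong) auto
  also have "\<dots> = (CLINT s|uniform01. CLINT u|law p. iexp (t * (s * u)))"
    by (rule integral_fst[symmetric, OF int])
  also have "\<dots> = (CLINT s|uniform01. char (law p) (t * s))"
    unfolding char_def by (simp add: mult.assoc)
  finally show ?thesis .
qed

lemma char_law_fixed_point:
  assumes eq: "is_equilibrium p"
  shows "char (law p) t = (CLINT s|uniform01. char (law p) (t * s))^2"
proof -
  have dens: "is_density p"
    using eq by (simp add: is_equilibrium_def)
  have "char (law p) t = char (scaled_law p) t * char (scaled_law p) t"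
    unfolding law_eq_convolution[OF eq] by (rule char_convolution) (simp_all add: prob_space_scaled_law[OF dens])
  then show ?thesis
    by (simp add: char_scaled_law[OF dens] power2_eq_square)
qed

text \<open>The remainder bound of \<open>char_approx2\<close> for the first-order expansion (n = 1).\<close>

definition char_error :: "real measure \<Rightarrow> real \<Rightarrow> real" where
  "char_error M r = (LINT x|M. min (4 * \<bar>x\<bar>) (r * x^2))"

context real_distribution
begin

lemma integrable_char_error:
  assumes ix: "integrable M (\<lambda>x. x)" and r: "0 \<le> r"
  shows "integrable M (\<lambda>x. min (4 * \<bar>x\<bar>) (r * x^2))"
proof (rule Bochner_Integration.integrable_bound)
  show "integrable M (\<lambda>x. 4 * \<bar>x\<bar>)"
    using ix by simp
  show "AE x in M. norm (min (4 * \<bar>x\<bar>) (r * x^2)) \<le> norm (4 * \<bar>x\<bar>)"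
    using r by (intro AE_I2) (auto simp: min_def)
qed simp

lemma char_error_mono:
  assumes ix: "integrable M (\<lambda>x. x)" and "0 \<le> r" "r \<le> r'"
  shows "char_error M r \<le> char_error M r'"
  unfolding char_error_def
  using assms by (intro integral_mono integrable_char_error min.mono) (simp_all add: mult_right_mono)

lemma char_error_tendsto_0:
  assumes ix: "integrable M (\<lambda>x. x)"
  shows "(\<lambda>n. char_error M (1 / Suc n)) \<longlonglongrightarrow> 0"
proof -
  have "(\<lambda>n. LINT x|M. min (4 * \<bar>x\<bar>) (1 / Suc n * x^2)) \<longlonglongrightarrow> (LINT x|M. 0)"
  proof (rule integral_dominated_convergence[where w="\<lambda>x. 4 * \<bar>x\<bar>"])
    show "integrable M (\<lambda>x. 4 * \<bar>x\<bar>)"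
      using ix by simp
    show "AE x in M. (\<lambda>n. min (4 * \<bar>x\<bar>) (1 / Suc n * x^2)) \<longlonglongrightarrow> 0"
    proof (rule AE_I2)
      fix x :: real
      have "(\<lambda>n. 1 / real (Suc n)) \<longlonglongrightarrow> 0"
        using LIMSEQ_inverse_real_of_nat by (simp add: inverse_eq_divide)
      then have "(\<lambda>n. min (4 * \<bar>x\<bar>) (1 / Suc n * x^2)) \<longlonglongrightarrow> min (4 * \<bar>x\<bar>) (0 * x^2)"
        by (intro tendsto_min tendsto_const tendsto_mult)
      then show "(\<lambda>n. min (4 * \<bar>x\<bar>) (1 / Suc n * x^2)) \<longlonglongrightarrow> 0"
        by simp
    qed
    show "AE x in M. norm (min (4 * \<bar>x\<bar>) (1 / Suc n * x^2)) \<le> 4 * \<bar>x\<bar>" for n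
      by (intro AE_I2) (auto simp: min_def simp del: of_nat_Suc)
  qed simp_all
  then show ?thesis
    by (simp add: char_error_def)
qed

lemma char_first_order_error:
  assumes ix: "integrable M (\<lambda>x. x)"
  shows "cmod (char M t - (1 + \<i> * t * expectation (\<lambda>x. x))) \<le> \<bar>t\<bar> / 2 * char_error M \<bar>t\<bar>"
proof -
  have "k \<le> 1 \<Longrightarrow> integrable M (\<lambda>x. x ^ k)" for k
    using ix by (auto simp: le_Suc_eq)
  from char_approx2[where n=1 and t=t, OF this] show ?thesis
    by (simp add: char_error_def prob_space[unfolded space_eq_univ] power2_abs[symmetric]
        numeral_eq_Suc mult_ac)
qed

lemma char_first_order:
  assumes ix: "integrable M (\<lambda>x. x)" and e: "0 < e"
  obtains r where "0 < r"
    and "\<And>t. \<bar>t\<bar> \<le> r \<Longrightarrow> cmod (char M t - (1 + \<i> * t * expectation (\<lambda>x. x))) \<le> e * \<bar>t\<bar>"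
proof -
  have "eventually (\<lambda>n. char_error M (1 / Suc n) < 2 * e) sequentially"
    using char_error_tendsto_0[OF ix] by (rule order_tendstoD(2)) (use e in linarith)
  then obtain N where N: "char_error M (1 / Suc N) < 2 * e"
    by (auto simp: eventually_sequentially)
  show ?thesis
  proof
    fix t :: real assume t: "\<bar>t\<bar> \<le> 1 / Suc N"
    have "cmod (char M t - (1 + \<i> * t * expectation (\<lambda>x. x))) \<le> \<bar>t\<bar> / 2 * char_error M \<bar>t\<bar>"
      by (rule char_first_order_error[OF ix])
    also have "\<dots> \<le> \<bar>t\<bar> / 2 * (2 * e)"
      using char_error_mono[OF ix _ t] N by (intro mult_left_mono) simp_all
    finally show "cmod (char M t - (1 + \<i> * t * expectation (\<lambda>x. x))) \<le> e * \<bar>t\<bar>"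
      by (simp add: mult.commute)
  qed simp
qed

end

section \<open>A contraction argument\<close>

lemma integral_uniform01:
  fixes h :: "real \<Rightarrow> 'b::{banach, second_countable_topology}"
  assumes [measurable]: "h \<in> borel_measurable borel"
  shows "integral\<^sup>L uniform01 h = (LINT s|lborel. indicator {0..<1} s *\<^sub>R h s)"
  unfolding uniform01_def ennreal_indicator[symmetric] by (rule integral_density) simp_all

lemma integral_uniform01_id:
  fixes a b :: real
  assumes "0 \<le> a" "a \<le> b" "b \<le> 1"
  shows "integrable uniform01 (\<lambda>s. s * indicator {a..b} s)"
    and "(LINT s|uniform01. s * indicator {a..b} s) = (b^2 - a^2) / 2"
proof -
  interpret U: prob_space uniform01
    by (rule prob_space_uniform01)
  show "integrable uniform01 (\<lambda>s. s * indicator {a..b} s)"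
    using assms by (intro U.integrable_const_bound[where B=1] AE_I2) (auto simp: indicator_def)
  have "(LINT s|uniform01. s * indicator {a..b} s) = (LINT s|lborel. indicator {0..<1} s * (s * indicator {a..b} s))"
    by (simp add: integral_uniform01)
  also have "\<dots> = (LINT s|lborel. s * indicator {a..b} s)"
    using assms by (intro integral_discrete_difference[where X="{1}"]) (auto simp: indicator_def)
  also have "\<dots> = (b^2 - a^2) / 2"
    using integral_power[of a b 1] assms by (simp add: power2_eq_square)
  finally show "(LINT s|uniform01. s * indicator {a..b} s) = (b^2 - a^2) / 2" .
qed

lemma fixed_point_norm_diff_le:
  fixes f g :: "real \<Rightarrow> complex"
  assumes [measurable]: "f \<in> borel_measurable borel" "g \<in> borel_measurable borel"
    and f_le: "\<And>t. cmod (f t) \<le> 1" and g_le: "\<And>t. cmod (g t) \<le> 1"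
    and f_fix: "f t = (CLINT s|uniform01. f (t * s))^2" and g_fix: "g t = (CLINT s|uniform01. g (t * s))^2"
  shows "cmod (f t - g t) \<le> 2 * (LINT s|uniform01. cmod (f (t * s) - g (t * s)))"
proof -
  interpret U: prob_space uniform01
    by (rule prob_space_uniform01)
  define A where "A = (CLINT s|uniform01. f (t * s))"
  define B where "B = (CLINT s|uniform01. g (t * s))"
  have int_f: "integrable uniform01 (\<lambda>s. f (t * s))"
    by (rule U.integrable_const_bound[where B=1]) (simp_all add: f_le)
  have int_g: "integrable uniform01 (\<lambda>s. g (t * s))"
    by (rule U.integrable_const_bound[where B=1]) (simp_all add: g_le)
  have "cmod A \<le> 1"
    unfolding A_def using f_le
    by (intro order_trans[OF integral_norm_bound U.integral_le_const]) (simp_all add: int_f)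
  moreover have "cmod B \<le> 1"
    unfolding B_def using g_le
    by (intro order_trans[OF integral_norm_bound U.integral_le_const]) (simp_all add: int_g)
  ultimately have sum_le: "cmod (A + B) \<le> 2"
    using norm_triangle_ineq[of A B] by simp
  have "A - B = (CLINT s|uniform01. f (t * s) - g (t * s))"
    unfolding A_def B_def by (rule Bochner_Integration.integral_diff[symmetric, OF int_f int_g])
  then have diff_le: "cmod (A - B) \<le> (LINT s|uniform01. cmod (f (t * s) - g (t * s)))"
    by simp
  have "cmod (f t - g t) = cmod (A - B) * cmod (A + B)"
    using f_fix g_fix by (simp add: A_def B_def norm_mult[symmetric] power2_eq_square algebra_simps)
  also have "\<dots> \<le> (LINT s|uniform01. cmod (f (t * s) - g (t * s))) * 2"
    using diff_le sum_le by (intro mult_mono) (simp_all add: integral_nonneg)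
  finally show ?thesis
    by simp
qed

lemma subaverage_ratio_step:
  fixes D :: "real \<Rightarrow> real"
  assumes [measurable]: "D \<in> borel_measurable borel"
    and D_nonneg: "\<And>t. 0 \<le> D t" and D_le: "\<And>t. D t \<le> B"
    and sub: "\<And>t. D t \<le> 2 * (LINT s|uniform01. D (t * s))"
    and upper: "\<And>t. \<bar>t\<bar> \<le> T \<Longrightarrow> D t \<le> m * \<bar>t\<bar>" and m: "0 \<le> m"
    and near0: "\<And>t. \<bar>t\<bar> \<le> d * T \<Longrightarrow> D t \<le> e * \<bar>t\<bar>"
    and d: "0 \<le> d" "d \<le> 1" and t: "\<bar>t\<bar> \<le> T"
  shows "D t \<le> (d^2 * e + (1 - d^2) * m) * \<bar>t\<bar>"
proof -
  interpret U: prob_space uniform01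
    by (rule prob_space_uniform01)
  let ?k = "\<lambda>s. \<bar>t\<bar> * (e * (s * indicator {0..d} s) + m * (s * indicator {d..1} s))"
  have pointwise: "D (t * s) \<le> ?k s" if s: "0 \<le> s" "s < 1" for s
  proof (cases "s \<le> d")
    case True
    have "\<bar>t\<bar> * s \<le> T * d"
      using t True s by (intro mult_mono) auto
    then have "\<bar>t * s\<bar> \<le> d * T"
      using s by (simp add: abs_mult mult.commute)
    then have "D (t * s) \<le> e * (\<bar>t\<bar> * s)"
      using near0[of "t * s"] s by (simp add: abs_mult)
    also have "\<dots> \<le> ?k s"
      using True s m by (simp add: indicator_def algebra_simps)
    finally show ?thesis .
  next
    case False
    have "\<bar>t\<bar> * s \<le> \<bar>t\<bar>"
      using s by (simp add: mult_left_le)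
    then have "\<bar>t * s\<bar> \<le> T"
      using s t by (simp add: abs_mult)
    then have "D (t * s) \<le> m * (\<bar>t\<bar> * s)"
      using upper[of "t * s"] s by (simp add: abs_mult)
    also have "\<dots> = ?k s"
      using False s by (simp add: indicator_def)
    finally show ?thesis .
  qed
  have AE_01: "AE s in uniform01. 0 \<le> s \<and> s < 1"
    unfolding uniform01_def by (subst AE_density) (auto simp: indicator_def)
  have "D t \<le> 2 * (LINT s|uniform01. D (t * s))"
    by (rule sub)
  also have "(LINT s|uniform01. D (t * s)) \<le> (LINT s|uniform01. ?k s)"
  proof (rule integral_mono_AE)
    show "integrable uniform01 (\<lambda>s. D (t * s))"
      by (rule U.integrable_const_bound[where B=B]) (simp_all add: D_nonneg D_le)
    show "integrable uniform01 ?k"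
      using integral_uniform01_id(1)[of 0 d] integral_uniform01_id(1)[of d 1] d by simp
    show "AE s in uniform01. D (t * s) \<le> ?k s"
      using AE_01 by eventually_elim (simp add: pointwise)
  qed
  also have "(LINT s|uniform01. ?k s) = \<bar>t\<bar> * (e * (d^2 / 2) + m * ((1 - d^2) / 2))"
  proof -
    have low: "(LINT s|uniform01. s * indicator {0..d} s) = d^2 / 2"
      using integral_uniform01_id(2)[of 0 d] d by simp
    have high: "(LINT s|uniform01. s * indicator {d..1} s) = (1 - d^2) / 2"
      using integral_uniform01_id(2)[of d 1] d by simp
    show ?thesis
      using integral_uniform01_id(1)[of 0 d] integral_uniform01_id(1)[of d 1] d by (simp add: low high)
  qed
  finally show ?thesis
    by (simp add: field_simps)
qed

lemma least_linear_bound: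
  fixes D :: "real \<Rightarrow> real"
  assumes D_nonneg: "\<And>t. 0 \<le> D t" and D_le: "\<And>t. D t \<le> B"
    and r: "0 < r" and near0: "\<And>t. \<bar>t\<bar> \<le> r \<Longrightarrow> D t \<le> a * \<bar>t\<bar>"
  obtains m where "0 \<le> m" and "\<And>t. \<bar>t\<bar> \<le> T \<Longrightarrow> D t \<le> m * \<bar>t\<bar>"
    and "\<And>c. 0 \<le> c \<Longrightarrow> (\<And>t. \<bar>t\<bar> \<le> T \<Longrightarrow> D t \<le> c * \<bar>t\<bar>) \<Longrightarrow> m \<le> c"
proof
  define Q where "Q = insert 0 ((\<lambda>t. D t / \<bar>t\<bar>) ` {t. \<bar>t\<bar> \<le> T})"
  have "0 \<le> B / r"
    using D_nonneg[of 0] D_le[of 0] r by simp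
  then have max_nonneg: "0 \<le> max a (B / r)"
    by (simp add: le_max_iff_disj)
  have ratio_le: "D t / \<bar>t\<bar> \<le> max a (B / r)" for t
  proof (cases "\<bar>t\<bar> \<le> r \<and> t \<noteq> 0")
    case True
    then have "D t / \<bar>t\<bar> \<le> a"
      using near0[of t] by (simp add: divide_le_eq)
    then show ?thesis
      by simp
  next
    case False
    then have "D t / \<bar>t\<bar> \<le> B / r \<or> t = 0"
      using r D_nonneg[of t] D_le[of t] by (auto intro: frac_le)
    then show ?thesis
      using max_nonneg by auto
  qed
  then have bdd: "bdd_above Q"
    using max_nonneg by (intro bdd_aboveI[where M="max a (B / r)"]) (auto simp: Q_def)
  show "0 \<le> Sup Q"
    using bdd by (rule cSup_upper[rotated]) (simp add: Q_def)
  show "D t \<le> Sup Q * \<bar>t\<bar>" if "\<bar>t\<bar> \<le> T" for t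
  proof (cases "t = 0")
    case True
    then show ?thesis
      using near0[of 0] r by simp
  next
    case False
    have "D t / \<bar>t\<bar> \<le> Sup Q"
      using that by (intro cSup_upper bdd) (auto simp: Q_def)
    then show ?thesis
      using False by (simp add: divide_le_eq)
  qed
  show "Sup Q \<le> c" if "0 \<le> c" and c: "\<And>t. \<bar>t\<bar> \<le> T \<Longrightarrow> D t \<le> c * \<bar>t\<bar>" for c
    using that by (intro cSup_least) (auto simp: Q_def divide_le_eq dest: c)
qed

lemma subaverage_vanishes:
  fixes D :: "real \<Rightarrow> real"
  assumes D_meas [measurable]: "D \<in> borel_measurable borel"
    and D_nonneg: "\<And>t. 0 \<le> D t" and D_le: "\<And>t. D t \<le> B"
    and sub: "\<And>t. D t \<le> 2 * (LINT s|uniform01. D (t * s))"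
    and small: "\<And>e. 0 < e \<Longrightarrow> \<exists>r>0. \<forall>t. \<bar>t\<bar> \<le> r \<longrightarrow> D t \<le> e * \<bar>t\<bar>"
  shows "D t0 = 0"
proof -
  obtain r1 where r1: "0 < r1" "\<And>t. \<bar>t\<bar> \<le> r1 \<Longrightarrow> D t \<le> 1 * \<bar>t\<bar>"
    using small[of 1] by auto
  define T where "T = \<bar>t0\<bar>"
  obtain m where m_nonneg: "0 \<le> m" and upper: "\<And>t. \<bar>t\<bar> \<le> T \<Longrightarrow> D t \<le> m * \<bar>t\<bar>"
    and least: "\<And>c. 0 \<le> c \<Longrightarrow> (\<And>t. \<bar>t\<bar> \<le> T \<Longrightarrow> D t \<le> c * \<bar>t\<bar>) \<Longrightarrow> m \<le> c"
    using least_linear_bound[OF D_nonneg D_le r1] by blast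
  have m_le: "m \<le> e" if e: "0 < e" for e
  proof -
    obtain r where r: "0 < r" "\<And>t. \<bar>t\<bar> \<le> r \<Longrightarrow> D t \<le> e * \<bar>t\<bar>"
      using small[OF e] by auto
    define d where "d = min (r / (T + 1)) (1 / 2)"
    have d: "0 < d" "d \<le> 1" "d * T \<le> r"
    proof -
      have "r / (T + 1) * T \<le> r"
        using r(1) by (simp add: T_def field_simps)
      then show "0 < d" "d \<le> 1" "d * T \<le> r"
        using r(1) by (auto simp: d_def T_def min_def intro: order_trans[rotated])
    qed
    have near0: "D t \<le> e * \<bar>t\<bar>" if "\<bar>t\<bar> \<le> d * T" for t
      using r(2) d(3) that by simp
    have "m \<le> d^2 * e + (1 - d^2) * m"
    proof (rule least)
      show "0 \<le> d^2 * e + (1 - d^2) * m"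
        using e m_nonneg d by (simp add: power_le_one)
      show "D t \<le> (d^2 * e + (1 - d^2) * m) * \<bar>t\<bar>" if "\<bar>t\<bar> \<le> T" for t
        using d that by (intro subaverage_ratio_step[OF D_meas D_nonneg D_le sub upper m_nonneg near0]) simp_all
    qed
    then have "d^2 * m \<le> d^2 * e"
      by (simp add: algebra_simps)
    then show ?thesis
      using d by simp
  qed
  have "m \<le> 0"
    by (rule field_le_epsilon) (simp add: m_le)
  then have "m * \<bar>t0\<bar> \<le> 0"
    by (simp add: mult_nonpos_nonneg)
  then show ?thesis
    using upper[of t0] D_nonneg[of t0] by (simp add: T_def)
qed

lemma fixed_point_unique:
  fixes f g :: "real \<Rightarrow> complex"
  assumes [measurable]: "f \<in> borel_measurable borel" "g \<in> borel_measurable borel"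
    and f_le: "\<And>t. cmod (f t) \<le> 1" and g_le: "\<And>t. cmod (g t) \<le> 1"
    and f_fix: "\<And>t. f t = (CLINT s|uniform01. f (t * s))^2"
    and g_fix: "\<And>t. g t = (CLINT s|uniform01. g (t * s))^2"
    and small: "\<And>e. 0 < e \<Longrightarrow> \<exists>r>0. \<forall>t. \<bar>t\<bar> \<le> r \<longrightarrow> cmod (f t - g t) \<le> e * \<bar>t\<bar>"
  shows "f = g"
proof
  fix t0
  have "cmod (f t0 - g t0) = 0"
  proof (rule subaverage_vanishes[where D="\<lambda>t. cmod (f t - g t)" and B=2])
    show "cmod (f t - g t) \<le> 2" for t
      using norm_triangle_ineq4[of "f t" "g t"] f_le[of t] g_le[of t] by simp
    show "cmod (f t - g t) \<le> 2 * (LINT s|uniform01. cmod (f (t * s) - g (t * s)))" for t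
      by (rule fixed_point_norm_diff_le) (simp_all add: f_le g_le f_fix[symmetric] g_fix[symmetric])
  qed (simp_all add: small)
  then show "f t0 = g t0"
    by simp
qed

section \<open>Uniqueness\<close>

lemma law_mean:
  assumes dens: "is_density p" and mean: "has_mean p w"
  shows "integrable (law p) (\<lambda>x. x)" and "(LINT x|law p. x) = w"
proof -
  have eq: "(\<lambda>x. zero_ext p x * x) = (\<lambda>x. indicator {0..} x * (x * p x))"
    by (auto simp: zero_ext_def fun_eq_iff)
  show "integrable (law p) (\<lambda>x. x)"
    using mean zero_ext_nonneg[OF dens] unfolding law_def
    by (subst integrable_density) (simp_all add: eq has_mean_def set_integrable_def zero_ext_measurable[OF dens])
  show "(LINT x|law p. x) = w"
    using mean zero_ext_nonneg[OF dens] unfolding law_def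
    by (subst integral_density) (simp_all add: eq has_mean_def set_lebesgue_integral_def zero_ext_measurable[OF dens])
qed

lemma equilibrium_law_unique:
  assumes p: "is_equilibrium p" "has_mean p w" and q: "is_equilibrium q" "has_mean q w"
  shows "law p = law q"
proof -
  have dens: "is_density p" "is_density q"
    using p q by (simp_all add: is_equilibrium_def)
  interpret P: real_distribution "law p"
    by (rule real_distribution_law[OF dens(1)])
  interpret Q: real_distribution "law q"
    by (rule real_distribution_law[OF dens(2)])
  note mean_p = law_mean[OF dens(1) p(2)] and mean_q = law_mean[OF dens(2) q(2)]
  have "char (law p) = char (law q)"
  proof (rule fixed_point_unique)
    show "char (law p) t = (CLINT s|uniform01. char (law p) (t * s))^2" for t
      by (rule char_law_fixed_point[OF p(1)])
    show "char (law q) t = (CLINT s|uniform01. char (law q) (t * s))^2" for t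
      by (rule char_law_fixed_point[OF q(1)])
    show "\<exists>r>0. \<forall>t. \<bar>t\<bar> \<le> r \<longrightarrow> cmod (char (law p) t - char (law q) t) \<le> e * \<bar>t\<bar>" if e: "0 < e" for e
    proof -
      let ?c = "\<lambda>t. 1 + \<i> * t * w"
      obtain rp where rp: "0 < rp" "\<And>t. \<bar>t\<bar> \<le> rp \<Longrightarrow> cmod (char (law p) t - ?c t) \<le> e / 2 * \<bar>t\<bar>"
        using P.char_first_order[OF mean_p(1), of "e / 2"] e mean_p(2) by auto
      obtain rq where rq: "0 < rq" "\<And>t. \<bar>t\<bar> \<le> rq \<Longrightarrow> cmod (char (law q) t - ?c t) \<le> e / 2 * \<bar>t\<bar>"
        using Q.char_first_order[OF mean_q(1), of "e / 2"] e mean_q(2) by auto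
      have "cmod (char (law p) t - char (law q) t) \<le> e * \<bar>t\<bar>" if "\<bar>t\<bar> \<le> min rp rq" for t
        using norm_triangle_ineq4[of "char (law p) t - ?c t" "char (law q) t - ?c t"] rp(2)[of t] rq(2)[of t] that
        by simp
      then show ?thesis
        using rp(1) rq(1) by (intro exI[of _ "min rp rq"]) simp
    qed
  qed (simp_all add: P.cmod_char_le_1 Q.cmod_char_le_1)
  then show ?thesis
    by (intro Levy_uniqueness P.real_distribution_axioms Q.real_distribution_axioms)
qed

lemma equilibrium_unique:
  assumes p: "is_equilibrium p" "has_mean p w" and q: "is_equilibrium q" "has_mean q w"
  shows "AE x in lborel. 0 \<le> x \<longrightarrow> p x = q x"
proof -
  have dens: "is_density p" "is_density q"
    using p q by (simp_all add: is_equilibrium_def)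
  note [measurable] = zero_ext_measurable[OF dens(1)] zero_ext_measurable[OF dens(2)]
  have "density lborel (\<lambda>x. ennreal (zero_ext p x)) = density lborel (\<lambda>x. ennreal (zero_ext q x))"
    using equilibrium_law_unique[OF p q] by (simp add: law_def)
  then have "AE x in lborel. ennreal (zero_ext p x) = ennreal (zero_ext q x)"
    by (intro sigma_finite_measure.density_unique[OF sigma_finite_lborel]) simp_all
  then show ?thesis
  proof eventually_elim
    fix x assume "ennreal (zero_ext p x) = ennreal (zero_ext q x)"
    then have "zero_ext p x = zero_ext q x"
      using zero_ext_nonneg[OF dens(1)] zero_ext_nonneg[OF dens(2)] by simp
    then show "0 \<le> x \<longrightarrow> p x = q x"
      by (simp add: zero_ext_def indicator_def)
  qed
qed

theorem theorem1:
  fixes w :: real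
  assumes "w > 0"
  shows "is_equilibrium (p_eq w) \<and> has_mean (p_eq w) w
    \<and> (\<forall>p. is_equilibrium p \<and> has_mean p w \<longrightarrow>
           (AE x in lborel. x \<ge> 0 \<longrightarrow> p x = p_eq w x))"
  using is_equilibrium_p_eq[OF assms] has_mean_p_eq[OF assms] equilibrium_unique by blast

end
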